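(* In the binary model, let $\lambda\in(\frac12,g]$, where $g=\frac{\sqrt5-1}{2}$, and let $I=[0,\frac{\lambda}{1-\lambda}]$. Suppose that the set of $x\in I$ for which $\mathcal{E}_\lambda(x)$ has zero logarithmic capacity (for example, is countable) is dense in $I$. Then almost surely $S$ is totally disconnected.
   Context: Binary model. Let $T=\{1,2\}^*$ be the set of finite words over $\{1,2\}$ (the rooted binary tree; $v|j$ is the prefix of $v$ of length $j$). Let $\{a_v\}_{v\in T,\,|v|\ge1}$ be i.i.d. random variables with $\mathbb{P}(a_v=0)=\mathbb{P}(a_v=1)=\frac12$. Fix $\lambda\in(0,1)$. For $\omega\in\{1,2\}^{\mathbb{N}}$ put $f(\omega)=\sum_{j\ge1}a_{\omega|j}\lambda^j$. Let $\mu$ be the image under $f$ of the uniform product measure on $\{1,2\}^{\mathbb{N}}$, and $S=f(\{1,2\}^{\mathbb{N}})$ its (random, compact) support. For $x\in\mathbb{R}$, $\mathcal{E}_\lambda(x)=\{a\in\{0,1\}^{\mathbb{N}}: x=\sum_{n\ge1}a_n\lambda^n\}$ is the set of expansions of $x$ in base $\lambda$ with digits $0,1$. Logarithmic capacity of subsets of $\{0,1\}^{\mathbb{N}}$ is taken with respect to the standard metric $d(a,b)=2^{-N(a,b)}$, where $N(a,b)$ is the length of the longest common prefix of $a$ and $b$ (i.e. capacity with respect to the kernel $\log(1/d(a,b))$). *)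

theory Defs
  imports "HOL-Probability.Probability"
begin

text \<open>Digit sequences in {0,1}^N are encoded as functions nat => bool,
  index n (0-based) standing for the (n+1)-st digit; True = 1, False = 0.\<close>

definition seq_space :: "(nat \<Rightarrow> bool) measure" where
  "seq_space = (\<Pi>\<^sub>M i\<in>(UNIV::nat set). count_space (UNIV::bool set))"

text \<open>Kernel log(1/d(a,b)) with d(a,b) = 2^(-N(a,b)), N = length of longest common
  prefix; equals N(a,b) * ln 2, and +infinity on the diagonal.\<close>
definition log_kernel :: "(nat \<Rightarrow> bool) \<Rightarrow> (nat \<Rightarrow> bool) \<Rightarrow> ennreal" where
  "log_kernel a b =
     (if a = b then \<infinity> else ennreal (real (LEAST n. a n \<noteq> b n) * ln 2))"

definition log_energy :: "(nat \<Rightarrow> bool) measure \<Rightarrow> ennreal" where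
  "log_energy \<mu> = (\<integral>\<^sup>+ a. (\<integral>\<^sup>+ b. log_kernel a b \<partial>\<mu>) \<partial>\<mu>)"

definition zero_log_capacity :: "(nat \<Rightarrow> bool) set \<Rightarrow> bool" where
  "zero_log_capacity E \<longleftrightarrow>
     (\<forall>\<mu>. prob_space \<mu> \<and> sets \<mu> = sets seq_space \<and> (AE a in \<mu>. a \<in> E)
            \<longrightarrow> log_energy \<mu> = \<infinity>)"

definition expansions :: "real \<Rightarrow> real \<Rightarrow> (nat \<Rightarrow> bool) set" where
  "expansions r x = {a. x = (\<Sum>n. (if a n then 1 else 0) * r ^ Suc n)}"

text \<open>Words over {1,2} are bool lists (False = 1, True = 2); omega|j = prefix of length j.\<close>
definition prefix_word :: "(nat \<Rightarrow> bool) \<Rightarrow> nat \<Rightarrow> bool list" where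
  "prefix_word \<omega> j = map \<omega> [0..<j]"

definition coding_map :: "real \<Rightarrow> (bool list \<Rightarrow> bool) \<Rightarrow> (nat \<Rightarrow> bool) \<Rightarrow> real" where
  "coding_map r A \<omega> = (\<Sum>j. (if A (prefix_word \<omega> (Suc j)) then 1 else 0) * r ^ Suc j)"

definition attractor :: "real \<Rightarrow> (bool list \<Rightarrow> bool) \<Rightarrow> real set" where
  "attractor r A = range (coding_map r A)"

definition totally_disconnected :: "'a::topological_space set \<Rightarrow> bool" where
  "totally_disconnected S \<longleftrightarrow> (\<forall>C. C \<subseteq> S \<and> connected C \<longrightarrow> (\<exists>a. C \<subseteq> {a}))"

end

theory Submission
  imports Defs
begin

text \<open>Fix \<open>x\<close> such that \<open>E = \<E>\<^sub>\<lambda>(x)\<close> has zero logarithmic capacity. If \<open>x \<in> S\<close>, then for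
  every \<open>n\<close> some path of length \<open>n\<close> in the tree carries labels forming a prefix of an expansion
  of \<open>x\<close>. By independence the probabilities \<open>h\<^sub>n(u)\<close> of these events obey
  \<open>h\<^sub>n\<^sub>+\<^sub>1(u) = 1 - (1 - (h\<^sub>n(u0) + h\<^sub>n(u1))/2)\<^sup>2\<close> and decrease to a limit \<open>h\<close>. If
  \<open>h([]) > 0\<close>, splitting mass at every vertex in proportion to \<open>h\<close> yields a probability
  measure on \<open>E\<close> (a closed set) whose logarithmic energy is at most \<open>4 ln 2 / h([])\<close>,
  contradicting zero capacity. Hence \<open>x \<notin> S\<close> almost surely. Doing this for a countable set
  of such \<open>x\<close> that is dense in \<open>I \<supseteq> S\<close>, almost surely \<open>S\<close> misses a dense subset of \<open>I\<close>,
  so it contains no interval and is totally disconnected.\<close>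

section \<open>Dense sets of reals\<close>

lemma countable_dense_subset:
  fixes D :: "'a::second_countable_topology set"
  obtains C where "countable C" "C \<subseteq> D" "D \<subseteq> closure C"
proof -
  obtain \<B> :: "'a set set" where \<B>: "countable \<B>" "{} \<notin> \<B>"
    "\<And>V. V \<in> \<B> \<Longrightarrow> openin (top_of_set D) V"
    "\<And>T. openin (top_of_set D) T \<Longrightarrow> \<exists>\<U>. \<U> \<subseteq> \<B> \<and> T = \<Union>\<U>"
    using subset_second_countable[of D] by blast
  define C where "C = (\<lambda>V. SOME x. x \<in> V) ` \<B>"
  have some_in: "(SOME x. x \<in> V) \<in> V" if "V \<in> \<B>" for V
    using \<B>(2) that by (metis all_not_in_conv someI_ex)
  have "C \<subseteq> D"
    using some_in \<B>(3) openin_imp_subset unfolding C_def by fastforce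
  moreover have "D \<subseteq> closure C"
  proof
    fix x assume "x \<in> D"
    show "x \<in> closure C"
    proof (rule closure_iff_nhds_not_empty[THEN iffD2], intro allI impI)
      fix T S assume "S \<subseteq> T" "open S" "x \<in> S"
      then obtain \<U> where "\<U> \<subseteq> \<B>" "D \<inter> S = \<Union>\<U>"
        using \<B>(4) openin_open_Int by metis
      then obtain V where "V \<in> \<B>" "V \<subseteq> D \<inter> S"
        using \<open>x \<in> D\<close> \<open>x \<in> S\<close> by blast
      then have "(SOME x. x \<in> V) \<in> C \<inter> T"
        using some_in \<open>S \<subseteq> T\<close> unfolding C_def by blast
      then show "C \<inter> T \<noteq> {}" by blast
    qed
  qed
  moreover have "countable C" unfolding C_def using \<B>(1) by simp
  ultimately show ?thesis using that by blast
qed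

lemma totally_disconnected_if_avoids_dense:
  fixes S C :: "real set"
  assumes "S \<subseteq> closure C" and "S \<inter> C = {}"
  shows "totally_disconnected S"
  unfolding totally_disconnected_def
proof (intro allI impI, elim conjE)
  fix K assume "K \<subseteq> S" "connected K"
  have False if "a \<in> K" "b \<in> K" "a < b" for a b
  proof -
    have "{a<..<b} \<subseteq> S"
      using \<open>connected K\<close> \<open>K \<subseteq> S\<close> that unfolding connected_iff_interval by fastforce
    moreover have "{a<..<b} \<inter> closure C \<noteq> {}"
      using assms(1) \<open>a < b\<close> calculation by (metis Int_absorb2 dual_order.trans greaterThanLessThan_empty_iff not_less)
    then have "{a<..<b} \<inter> C \<noteq> {}"
      using open_Int_closure_eq_empty[of "{a<..<b}" C] by auto
    ultimately show False using assms(2) by blast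
  qed
  then show "\<exists>a. K \<subseteq> {a}"
    by (metis insertCI linorder_neqE_linordered_idom subsetI)
qed

section \<open>Digit expansions\<close>

lemma length_prefix_word [simp]: "length (prefix_word a k) = k"
  by (simp add: prefix_word_def)

lemma prefix_word_eq_iff: "prefix_word a k = prefix_word b k \<longleftrightarrow> (\<forall>j<k. a j = b j)"
  by (auto simp: prefix_word_def)

lemma prefix_word_Suc: "prefix_word a (Suc k) = prefix_word a k @ [a k]"
  by (simp add: prefix_word_def)

definition digit_series :: "real \<Rightarrow> (nat \<Rightarrow> bool) \<Rightarrow> nat \<Rightarrow> real" where
  "digit_series r a j = (if a j then 1 else 0) * r ^ Suc j"

lemma expansions_eq: "expansions r x = {a. x = suminf (digit_series r a)}"
  unfolding expansions_def digit_series_def[abs_def] by (rule refl)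

lemma coding_map_eq: "coding_map r \<alpha> \<omega> = suminf (digit_series r (\<lambda>j. \<alpha> (prefix_word \<omega> (Suc j))))"
  unfolding coding_map_def digit_series_def[abs_def] by (rule refl)

lemma geometric_Suc_sums:
  fixes r :: real assumes "0 < r" "r < 1"
  shows "(\<lambda>j. r ^ Suc j) sums (r / (1 - r))"
  using sums_mult[OF geometric_sums[of r], of r] assms by simp

lemma digit_series_bounds: "0 < r \<Longrightarrow> 0 \<le> digit_series r a j \<and> digit_series r a j \<le> r ^ Suc j"
  by (simp add: digit_series_def)

lemma summable_digit_series:
  assumes "0 < r" "r < 1" shows "summable (digit_series r a)"
  by (rule summable_comparison_test'[OF sums_summable[OF geometric_Suc_sums[OF assms]], of 0])
     (use digit_series_bounds[OF assms(1)] in auto)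

lemma suminf_digit_series_bounds:
  assumes "0 < r" "r < 1"
  shows "suminf (digit_series r a) \<in> {0..r / (1 - r)}"
  using suminf_nonneg[OF summable_digit_series[OF assms]]
    suminf_le[OF _ summable_digit_series[OF assms] sums_summable[OF geometric_Suc_sums[OF assms]]]
    sums_unique[OF geometric_Suc_sums[OF assms]] digit_series_bounds[OF assms(1)]
  by auto

lemma attractor_subset: "0 < r \<Longrightarrow> r < 1 \<Longrightarrow> attractor r \<alpha> \<subseteq> {0..r / (1 - r)}"
  unfolding attractor_def coding_map_eq using suminf_digit_series_bounds by blast

lemma suminf_digit_series_close:
  assumes r: "0 < r" "r < 1" and agree: "\<And>j. j < k \<Longrightarrow> a j = b j"
  shows "\<bar>suminf (digit_series r a) - suminf (digit_series r b)\<bar> \<le> r ^ k * (r / (1 - r))"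
proof -
  define f where "f j = digit_series r a j - digit_series r b j" for j
  have "summable f"
    unfolding f_def using summable_digit_series[OF r] by (intro summable_diff)
  have "suminf (digit_series r a) - suminf (digit_series r b) = suminf f"
    unfolding f_def by (rule suminf_diff[OF summable_digit_series[OF r] summable_digit_series[OF r]])
  also have "\<dots> = (\<Sum>n. f (n + k)) + (\<Sum>i<k. f i)"
    by (rule suminf_split_initial_segment[OF \<open>summable f\<close>])
  also have "(\<Sum>i<k. f i) = 0"
    using agree by (simp add: f_def digit_series_def)
  finally have tail: "suminf (digit_series r a) - suminf (digit_series r b) = (\<Sum>n. f (n + k))"
    by simp
  have geo: "(\<lambda>n. r ^ k * r ^ Suc n) sums (r ^ k * (r / (1 - r)))"
    by (rule sums_mult[OF geometric_Suc_sums[OF r]])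
  have "norm (\<Sum>n. f (n + k)) \<le> (\<Sum>n. r ^ k * r ^ Suc n)"
  proof (rule norm_suminf_le)
    fix n
    have "\<bar>f (n + k)\<bar> \<le> r ^ Suc (n + k)"
      using digit_series_bounds[OF r(1), of a "n + k"] digit_series_bounds[OF r(1), of b "n + k"]
      unfolding f_def by linarith
    then show "norm (f (n + k)) \<le> r ^ k * r ^ Suc n"
      by (simp add: power_add mult_ac)
  qed (rule sums_summable[OF geo])
  then show ?thesis
    using tail sums_unique[OF geo] by simp
qed

definition prefix_words :: "(nat \<Rightarrow> bool) set \<Rightarrow> bool list set" where
  "prefix_words E = {prefix_word a k | a k. a \<in> E}"

lemma expansions_closed:
  assumes r: "0 < r" "r < 1" and pref: "\<And>k. prefix_word a k \<in> prefix_words (expansions r x)"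
  shows "a \<in> expansions r x"
proof -
  have close: "\<bar>suminf (digit_series r a) - x\<bar> \<le> r ^ k * (r / (1 - r))" for k
  proof -
    obtain b j where b: "b \<in> expansions r x" "prefix_word a k = prefix_word b j"
      using pref[of k] unfolding prefix_words_def by blast
    then have "j = k"
      by (metis length_prefix_word)
    show ?thesis
      using suminf_digit_series_close[OF r, of k a b] b \<open>j = k\<close> prefix_word_eq_iff
      unfolding expansions_eq by auto
  qed
  have "(\<lambda>k. r ^ k * (r / (1 - r))) \<longlonglongrightarrow> 0"
    using r by (intro tendsto_mult_left_zero LIMSEQ_power_zero) auto
  then have "\<bar>suminf (digit_series r a) - x\<bar> \<le> 0"
    by (rule LIMSEQ_le_const) (use close in auto)
  then show ?thesis
    unfolding expansions_eq by simp
qed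

section \<open>Hitting probabilities on the labelled tree\<close>

definition prefix_closed :: "bool list set \<Rightarrow> bool" where
  "prefix_closed P \<longleftrightarrow> (\<forall>u c. u @ [c] \<in> P \<longrightarrow> u \<in> P)"

lemma prefix_closed_prefix_words: "prefix_closed (prefix_words E)"
  unfolding prefix_closed_def prefix_words_def
proof (intro allI impI)
  fix u c assume "u @ [c] \<in> {prefix_word a k |a k. a \<in> E}"
  then obtain a k where "a \<in> E" "u @ [c] = prefix_word a k" by blast
  moreover from this have "k = Suc (length u)"
    by (metis length_append_singleton length_prefix_word)
  ultimately show "u \<in> {prefix_word a k |a k. a \<in> E}"
    by (auto simp: prefix_word_Suc)
qed

definition either_prob :: "real \<Rightarrow> real" where
  "either_prob s = 1 - (1 - s)\<^sup>2"

lemma either_prob_mono: "0 \<le> x \<Longrightarrow> x \<le> y \<Longrightarrow> y \<le> 1 \<Longrightarrow> either_prob x \<le> either_prob y"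
  unfolding either_prob_def using power_mono[of "1 - y" "1 - x" 2] by simp

lemma either_prob_range: "0 \<le> x \<Longrightarrow> x \<le> 1 \<Longrightarrow> either_prob x \<in> {0..1}"
  unfolding either_prob_def using power_mono[of "1 - x" 1 2] by simp

lemma either_prob_half_inverse_bound:
  fixes s :: real assumes "0 < s" "s \<le> 2"
  shows "1/4 + 1/s \<le> 1 / either_prob (s / 2)"
proof -
  have eq: "either_prob (s / 2) = s * (4 - s) / 4"
    by (simp add: either_prob_def power2_eq_square field_simps)
  have "1/4 + 1/s = (s + 4) * (4 - s) / (4 * (s * (4 - s)))"
    using assms by (simp add: field_simps)
  also have "\<dots> \<le> 16 / (4 * (s * (4 - s)))"
    using assms by (intro divide_right_mono) (auto simp: algebra_simps power2_eq_square)
  also have "\<dots> = 1 / either_prob (s / 2)"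
    unfolding eq by simp
  finally show ?thesis .
qed

fun hits :: "(bool list \<Rightarrow> bool) \<Rightarrow> bool list set \<Rightarrow> nat \<Rightarrow> bool list \<Rightarrow> bool list \<Rightarrow> bool" where
  "hits \<alpha> P 0 v l \<longleftrightarrow> l \<in> P"
| "hits \<alpha> P (Suc n) v l \<longleftrightarrow> (\<exists>c. hits \<alpha> P n (v @ [c]) (l @ [\<alpha> (v @ [c])]))"

text \<open>With independent fair labels, the two children of a vertex independently extend the
  label word by a fair bit; this gives the recursion for the probability of \<open>hits\<close>.\<close>

fun hit_prob :: "bool list set \<Rightarrow> nat \<Rightarrow> bool list \<Rightarrow> real" where
  "hit_prob P 0 l = (if l \<in> P then 1 else 0)"
| "hit_prob P (Suc n) l = either_prob ((hit_prob P n (l @ [False]) + hit_prob P n (l @ [True])) / 2)"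

lemma hits_coding_map: "hits \<alpha> (prefix_words (expansions r (coding_map r \<alpha> \<omega>))) n [] []"
proof -
  define a where "a j = \<alpha> (prefix_word \<omega> (Suc j))" for j
  have "a \<in> expansions r (coding_map r \<alpha> \<omega>)"
    unfolding expansions_eq coding_map_eq a_def by simp
  have "hits \<alpha> (prefix_words (expansions r (coding_map r \<alpha> \<omega>))) m (prefix_word \<omega> k) (prefix_word a k)"
    for m k
  proof (induction m arbitrary: k)
    case 0
    show ?case
      using \<open>a \<in> _\<close> by (auto simp: prefix_words_def)
  next
    case (Suc m)
    have "prefix_word a (Suc k) = prefix_word a k @ [\<alpha> (prefix_word \<omega> k @ [\<omega> k])]"
      by (simp add: a_def prefix_word_Suc)
    then show ?case
      using Suc.IH[of "Suc k"] by (auto simp: prefix_word_Suc intro!: exI[of _ "\<omega> k"])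
  qed
  from this[of n 0] show ?thesis
    by (simp add: prefix_word_def)
qed

lemma hit_prob_range: "hit_prob P n l \<in> {0..1}"
proof (induction n arbitrary: l)
  case (Suc n)
  show ?case
    using Suc.IH[of "l @ [False]"] Suc.IH[of "l @ [True]"]
      either_prob_range[of "(hit_prob P n (l @ [False]) + hit_prob P n (l @ [True])) / 2"]
    by simp
qed simp

lemma hit_prob_Suc_le:
  assumes "prefix_closed P" shows "hit_prob P (Suc n) l \<le> hit_prob P n l"
proof (induction n arbitrary: l)
  case 0
  show ?case
    using assms hit_prob_range[of P 1 l] unfolding prefix_closed_def
    by (auto simp: either_prob_def)
next
  case (Suc n)
  show ?case
    using Suc.IH[of "l @ [False]"] Suc.IH[of "l @ [True]"]
      hit_prob_range[of P "Suc n" "l @ [False]"] hit_prob_range[of P "Suc n" "l @ [True]"]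
      hit_prob_range[of P n "l @ [False]"] hit_prob_range[of P n "l @ [True]"]
    by (simp only: hit_prob.simps(2)[of P "Suc n"] hit_prob.simps(2)[of P n])
       (intro either_prob_mono; simp)
qed

definition hit_limit :: "bool list set \<Rightarrow> bool list \<Rightarrow> real" where
  "hit_limit P l = lim (\<lambda>n. hit_prob P n l)"

lemma hit_prob_tendsto:
  assumes "prefix_closed P" shows "(\<lambda>n. hit_prob P n l) \<longlonglongrightarrow> hit_limit P l"
proof -
  have "decseq (\<lambda>n. hit_prob P n l)"
    using hit_prob_Suc_le[OF assms] unfolding decseq_Suc_iff by blast
  then obtain L where "(\<lambda>n. hit_prob P n l) \<longlonglongrightarrow> L"
    using decseq_convergent hit_prob_range by (metis atLeastAtMost_iff)
  then show ?thesis
    unfolding hit_limit_def by (simp add: limI)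
qed

lemma hit_limit_le: "prefix_closed P \<Longrightarrow> hit_limit P l \<le> hit_prob P n l"
  using hit_prob_Suc_le hit_prob_tendsto by (intro decseq_ge) (auto simp: decseq_Suc_iff)

lemma hit_limit_range: "prefix_closed P \<Longrightarrow> hit_limit P l \<in> {0..1}"
  using hit_limit_le[of P l 0] LIMSEQ_le_const[OF hit_prob_tendsto, of P 0 l] hit_prob_range
  by (fastforce split: if_splits)

lemma hit_limit_rec:
  assumes "prefix_closed P"
  shows "hit_limit P l = either_prob ((hit_limit P (l @ [False]) + hit_limit P (l @ [True])) / 2)"
proof (rule LIMSEQ_unique)
  show "(\<lambda>n. hit_prob P (Suc n) l) \<longlonglongrightarrow> hit_limit P l"
    using hit_prob_tendsto[OF assms] by (rule LIMSEQ_Suc)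
  show "(\<lambda>n. hit_prob P (Suc n) l) \<longlonglongrightarrow>
      either_prob ((hit_limit P (l @ [False]) + hit_limit P (l @ [True])) / 2)"
    unfolding hit_prob.simps either_prob_def by (intro tendsto_intros hit_prob_tendsto[OF assms]) simp
qed

lemma hit_limit_pos_imp_mem: "prefix_closed P \<Longrightarrow> 0 < hit_limit P l \<Longrightarrow> l \<in> P"
  using hit_limit_le[of P l 0] by (auto split: if_splits)

section \<open>Cylinders and logarithmic energy\<close>

definition cylinder :: "bool list \<Rightarrow> (nat \<Rightarrow> bool) set" where
  "cylinder u = {a. prefix_word a (length u) = u}"

lemma space_seq_space [simp]: "space seq_space = UNIV"
  by (simp add: seq_space_def space_PiM)

lemma measurable_prefix_word [measurable]: "(\<lambda>a. prefix_word a k) \<in> seq_space \<rightarrow>\<^sub>M count_space UNIV"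
proof (induction k)
  case (Suc k)
  have coord: "(\<lambda>a. a k) \<in> seq_space \<rightarrow>\<^sub>M count_space UNIV"
    unfolding seq_space_def by (rule measurable_component_singleton) simp
  have "(\<lambda>a. (\<lambda>u a. u @ [a k]) (prefix_word a k) a) \<in> seq_space \<rightarrow>\<^sub>M count_space UNIV"
    by (rule measurable_compose_countable'[OF _ Suc.IH]) (use coord in auto)
  then show ?case by (simp add: prefix_word_Suc)
qed (simp add: prefix_word_def)

lemma cylinder_in_sets [measurable]: "cylinder u \<in> sets seq_space"
proof -
  have "(\<lambda>a. prefix_word a (length u)) -` {u} \<inter> space seq_space \<in> sets seq_space"
    by measurable
  then show ?thesis by (simp add: cylinder_def vimage_def)
qed

lemma mem_cylinder_prefix_word_iff: "b \<in> cylinder (prefix_word a k) \<longleftrightarrow> (\<forall>j<k. a j = b j)"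
  by (auto simp: cylinder_def prefix_word_eq_iff)

lemma log_kernel_eq_suminf:
  "log_kernel a b = (\<Sum>k. ennreal (ln 2) * indicator (cylinder (prefix_word a (Suc k))) b)"
proof (cases "a = b")
  case True
  have "(\<Sum>k::nat. ennreal (ln 2)) = \<infinity>"
  proof (rule ccontr)
    assume "(\<Sum>k::nat. ennreal (ln 2)) \<noteq> \<infinity>"
    then have "summable (\<lambda>k::nat. ln 2 :: real)"
      using summable_suminf_not_top[of "\<lambda>_. ln 2"] by simp
    then show False
      by (simp add: summable_const_iff)
  qed
  then show ?thesis
    using True by (simp add: log_kernel_def mem_cylinder_prefix_word_iff)
next
  case False
  define N where "N = (LEAST n. a n \<noteq> b n)"
  have "a N \<noteq> b N"
    unfolding N_def by (rule LeastI_ex) (use False in auto)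
  have agree_iff: "(\<forall>j<Suc k. a j = b j) \<longleftrightarrow> k < N" for k
  proof
    assume "\<forall>j<Suc k. a j = b j"
    then show "k < N"
      using \<open>a N \<noteq> b N\<close> not_le by fastforce
  next
    assume "k < N"
    show "\<forall>j<Suc k. a j = b j"
    proof (intro allI impI)
      fix j assume "j < Suc k"
      then have "j < (LEAST n. a n \<noteq> b n)"
        using \<open>k < N\<close> unfolding N_def by simp
      then show "a j = b j"
        using not_less_Least by blast
    qed
  qed
  have "(\<Sum>k. ennreal (ln 2) * indicator (cylinder (prefix_word a (Suc k))) b) =
      (\<Sum>k. if k < N then ennreal (ln 2) else 0)"
    by (intro suminf_cong) (simp add: mem_cylinder_prefix_word_iff agree_iff)
  also have "\<dots> = (\<Sum>k<N. ennreal (ln 2))"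
    by (subst suminf_finite[of "{..<N}"]) auto
  also have "\<dots> = ennreal (real N * ln 2)"
    by (simp add: ennreal_mult ennreal_of_nat_eq_real_of_nat)
  finally show ?thesis
    using False by (simp add: log_kernel_def N_def)
qed

lemma sum_words_Suc:
  "(\<Sum>u\<in>{u::bool list. length u = Suc k}. f u)
     = (\<Sum>u\<in>{u. length u = k}. f (u @ [False]) + f (u @ [True]))"
proof -
  let ?W = "{u::bool list. length u = k}"
  have fin: "finite ?W"
    using finite_lists_length_eq[of "UNIV :: bool set" k] by simp
  have words: "{u::bool list. length u = Suc k} = (\<lambda>u. u @ [False]) ` ?W \<union> (\<lambda>u. u @ [True]) ` ?W"
  proof (intro set_eqI iffI)
    fix u :: "bool list" assume "u \<in> {u. length u = Suc k}"
    then have "u = butlast u @ [last u]" "butlast u \<in> ?W"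
      by (auto intro!: append_butlast_last_id[symmetric])
    then have "u \<in> (\<lambda>v. v @ [last u]) ` ?W"
      by (intro image_eqI[of u _ "butlast u"])
    then show "u \<in> (\<lambda>u. u @ [False]) ` ?W \<union> (\<lambda>u. u @ [True]) ` ?W"
      by (cases "last u") auto
  qed auto
  have "(\<Sum>u\<in>{u::bool list. length u = Suc k}. f u)
      = (\<Sum>u\<in>(\<lambda>u. u @ [False]) ` ?W. f u) + (\<Sum>u\<in>(\<lambda>u. u @ [True]) ` ?W. f u)"
    unfolding words by (rule sum.union_disjoint) (auto simp: fin)
  also have "\<dots> = (\<Sum>u\<in>?W. f (u @ [False])) + (\<Sum>u\<in>?W. f (u @ [True]))"
    by (subst (1 2) sum.reindex) (auto simp: inj_on_def)
  finally show ?thesis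
    by (simp add: sum.distrib)
qed

lemma nn_integral_cylinder_measure:
  assumes sets: "sets \<mu> = sets seq_space"
  shows "(\<integral>\<^sup>+a. emeasure \<mu> (cylinder (prefix_word a k)) \<partial>\<mu>)
       = (\<Sum>u\<in>{u. length u = k}. emeasure \<mu> (cylinder u) ^ 2)"
proof -
  have fin: "finite {u :: bool list. length u = k}"
    using finite_lists_length_eq[of "UNIV :: bool set" k] by simp
  have cyl: "cylinder u \<in> sets \<mu>" for u
    using sets by simp
  have "(\<integral>\<^sup>+a. emeasure \<mu> (cylinder (prefix_word a k)) \<partial>\<mu>)
      = (\<integral>\<^sup>+a. (\<Sum>u\<in>{u. length u = k}. emeasure \<mu> (cylinder u) * indicator (cylinder u) a) \<partial>\<mu>)"
  proof (rule nn_integral_cong)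
    fix a
    have "(\<Sum>u\<in>{u. length u = k}. emeasure \<mu> (cylinder u) * indicator (cylinder u) a)
        = (\<Sum>u\<in>{u. length u = k}. if u = prefix_word a k then emeasure \<mu> (cylinder u) else 0)"
      by (intro sum.cong) (auto simp: cylinder_def)
    also have "\<dots> = emeasure \<mu> (cylinder (prefix_word a k))"
      using fin by simp
    finally show "emeasure \<mu> (cylinder (prefix_word a k))
        = (\<Sum>u\<in>{u. length u = k}. emeasure \<mu> (cylinder u) * indicator (cylinder u) a)" ..
  qed
  also have "\<dots> = (\<Sum>u\<in>{u. length u = k}.
      \<integral>\<^sup>+a. emeasure \<mu> (cylinder u) * indicator (cylinder u) a \<partial>\<mu>)"
    by (rule nn_integral_sum) (use cyl in measurable)
  also have "\<dots> = (\<Sum>u\<in>{u. length u = k}. emeasure \<mu> (cylinder u) * emeasure \<mu> (cylinder u))"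
    using cyl by (simp only: nn_integral_cmult_indicator)
  finally show ?thesis
    by (simp add: power2_eq_square)
qed

lemma log_energy_eq_cylinders:
  assumes sets [measurable_cong]: "sets \<mu> = sets seq_space"
  shows "log_energy \<mu> =
    (\<Sum>k. ennreal (ln 2) * (\<Sum>u\<in>{u. length u = Suc k}. emeasure \<mu> (cylinder u) ^ 2))"
proof -
  have inner: "(\<integral>\<^sup>+b. log_kernel a b \<partial>\<mu>) = (\<Sum>k. ennreal (ln 2) * emeasure \<mu> (cylinder (prefix_word a (Suc k))))" for a
  proof -
    have "(\<integral>\<^sup>+b. log_kernel a b \<partial>\<mu>)
        = (\<Sum>k. \<integral>\<^sup>+b. ennreal (ln 2) * indicator (cylinder (prefix_word a (Suc k))) b \<partial>\<mu>)"
      unfolding log_kernel_eq_suminf by (rule nn_integral_suminf) measurable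
    then show ?thesis
      using sets by (simp only: nn_integral_cmult_indicator cylinder_in_sets)
  qed
  have "log_energy \<mu> = (\<integral>\<^sup>+a. (\<Sum>k. ennreal (ln 2) * emeasure \<mu> (cylinder (prefix_word a (Suc k)))) \<partial>\<mu>)"
    unfolding log_energy_def inner ..
  also have "\<dots> = (\<Sum>k. ennreal (ln 2) * (\<integral>\<^sup>+a. emeasure \<mu> (cylinder (prefix_word a (Suc k))) \<partial>\<mu>))"
    by (subst nn_integral_suminf) (simp_all add: nn_integral_cmult)
  finally show ?thesis
    by (simp only: nn_integral_cylinder_measure[OF sets])
qed

lemma AE_cylinder_nonnull:
  assumes sets: "sets \<mu> = sets seq_space"
  shows "AE a in \<mu>. \<forall>k. emeasure \<mu> (cylinder (prefix_word a k)) \<noteq> 0"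
proof -
  have "AE a in \<mu>. \<forall>u\<in>UNIV. emeasure \<mu> (cylinder u) = 0 \<longrightarrow> a \<notin> cylinder u"
  proof (rule AE_ball_countable[THEN iffD2])
    show "\<forall>u\<in>UNIV. AE a in \<mu>. emeasure \<mu> (cylinder u) = 0 \<longrightarrow> a \<notin> cylinder u"
      using sets by (auto intro!: AE_not_in)
  qed simp
  then show ?thesis
  proof eventually_elim
    case (elim a)
    have "a \<in> cylinder (prefix_word a k)" for k
      by (simp add: cylinder_def)
    then show ?case
      using elim by blast
  qed
qed

section \<open>Measures with prescribed cylinder masses\<close>

definition unit_lebesgue :: "real measure" where
  "unit_lebesgue = restrict_space lborel {0..<1}"

lemma space_unit_lebesgue: "space unit_lebesgue = {0..<1}"
  by (simp add: unit_lebesgue_def)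

lemma emeasure_unit_lebesgue: "A \<subseteq> {0..<1} \<Longrightarrow> emeasure unit_lebesgue A = emeasure lborel A"
  unfolding unit_lebesgue_def by (rule emeasure_restrict_space) auto

lemma prob_space_unit_lebesgue: "prob_space unit_lebesgue"
  by (rule prob_spaceI) (simp add: emeasure_unit_lebesgue space_unit_lebesgue)

locale cylinder_flow =
  fixes m :: "bool list \<Rightarrow> real"
  assumes nonneg: "\<And>u. 0 \<le> m u"
    and root: "m [] = 1"
    and split: "\<And>u. m (u @ [False]) + m (u @ [True]) = m u"
begin

text \<open>The words of length \<open>k\<close> tile \<open>[0,1)\<close>, in lexicographic order, by the intervals
  \<open>[left_end u, left_end u + m u)\<close>; \<open>code t k\<close> is the word whose interval contains \<open>t\<close>,
  so pushing Lebesgue measure forward along \<open>t \<mapsto> digits t\<close> gives cylinder masses \<open>m\<close>.\<close>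

definition left_end :: "bool list \<Rightarrow> real" where
  "left_end u = (\<Sum>j<length u. if u ! j then m (take j u @ [False]) else 0)"

primrec code :: "real \<Rightarrow> nat \<Rightarrow> bool list" where
  "code t 0 = []"
| "code t (Suc k) = code t k @ [left_end (code t k) + m (code t k @ [False]) \<le> t]"

definition digits :: "real \<Rightarrow> nat \<Rightarrow> bool" where
  "digits t j = code t (Suc j) ! j"

lemma left_end_Nil [simp]: "left_end [] = 0"
  by (simp add: left_end_def)

lemma left_end_snoc: "left_end (u @ [c]) = left_end u + (if c then m (u @ [False]) else 0)"
  unfolding left_end_def by (auto simp: nth_append intro!: sum.cong)

lemma left_end_bounds: "0 \<le> left_end u \<and> left_end u + m u \<le> 1"
proof (induction u rule: rev_induct)
  case (snoc c u)
  then show ?case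
    using split[of u] nonneg[of "u @ [False]"] nonneg[of "u @ [True]"]
    by (cases c) (auto simp: left_end_snoc)
qed (simp add: root)

lemma length_code [simp]: "length (code t k) = k"
  by (induction k) auto

lemma code_eq_iff:
  assumes "t \<in> {0..<1}" "length u = k"
  shows "code t k = u \<longleftrightarrow> t \<in> {left_end u..<left_end u + m u}"
  using assms(2)
proof (induction k arbitrary: u)
  case 0
  then show ?case using assms(1) root by simp
next
  case (Suc k)
  then obtain v c where u: "u = v @ [c]" and "length v = k"
    by (metis length_Suc_conv_rev)
  have "code t (Suc k) = u \<longleftrightarrow> code t k = v \<and> c = (left_end v + m (v @ [False]) \<le> t)"
    using u by auto
  also have "\<dots> \<longleftrightarrow> t \<in> {left_end v..<left_end v + m v} \<and> c = (left_end v + m (v @ [False]) \<le> t)"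
    using Suc.IH[OF \<open>length v = k\<close>] by simp
  also have "\<dots> \<longleftrightarrow> t \<in> {left_end u..<left_end u + m u}"
    using split[of v] nonneg[of "v @ [False]"] nonneg[of "v @ [True]"] u
    by (cases c) (auto simp: left_end_snoc)
  finally show ?case .
qed

lemma code_eq_prefix_word: "code t k = prefix_word (digits t) k"
  by (induction k) (auto simp: digits_def prefix_word_Suc nth_append prefix_word_def)

lemma code_preimage:
  "length u = k \<Longrightarrow> {t \<in> space unit_lebesgue. code t k = u} = {left_end u..<left_end u + m u}"
  using code_eq_iff[of _ u k] left_end_bounds[of u] nonneg[of u] by (auto simp: space_unit_lebesgue)

lemma code_preimage_sets: "{t \<in> space unit_lebesgue. code t k = u} \<in> sets unit_lebesgue"
proof (cases "length u = k")
  case True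
  have "{left_end u..<left_end u + m u} \<in> sets unit_lebesgue"
    using left_end_bounds[of u] unfolding unit_lebesgue_def
    by (subst sets_restrict_space_iff) auto
  then show ?thesis
    using code_preimage[OF True] by simp
next
  case False
  then have empty: "{t \<in> space unit_lebesgue. code t k = u} = {}"
    by auto
  show ?thesis
    unfolding empty by (rule sets.empty_sets)
qed

lemma measurable_code: "(\<lambda>t. code t k) \<in> unit_lebesgue \<rightarrow>\<^sub>M count_space UNIV"
proof -
  have "(\<lambda>t. code t k) -` {u} \<inter> space unit_lebesgue = {t \<in> space unit_lebesgue. code t k = u}" for u
    by auto
  then show ?thesis
    using code_preimage_sets by (simp add: measurable_count_space_eq2_countable)
qed

lemma measurable_digits: "digits \<in> unit_lebesgue \<rightarrow>\<^sub>M seq_space"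
  unfolding seq_space_def
proof (rule measurable_PiM_single')
  fix j
  have "(\<lambda>t. code t (Suc j) ! j) \<in> unit_lebesgue \<rightarrow>\<^sub>M count_space UNIV"
    using measurable_code by (rule measurable_compose) simp
  then show "(\<lambda>t. digits t j) \<in> unit_lebesgue \<rightarrow>\<^sub>M count_space UNIV"
    by (simp add: digits_def)
qed auto

definition flow_measure :: "(nat \<Rightarrow> bool) measure" where
  "flow_measure = distr unit_lebesgue seq_space digits"

lemma prob_space_flow_measure: "prob_space flow_measure"
  unfolding flow_measure_def
  by (rule prob_space.prob_space_distr[OF prob_space_unit_lebesgue measurable_digits])

lemma sets_flow_measure: "sets flow_measure = sets seq_space"
  by (simp add: flow_measure_def)

lemma emeasure_flow_measure_cylinder: "emeasure flow_measure (cylinder u) = m u"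
proof -
  have "emeasure flow_measure (cylinder u) = emeasure unit_lebesgue (digits -` cylinder u \<inter> space unit_lebesgue)"
    unfolding flow_measure_def by (rule emeasure_distr[OF measurable_digits cylinder_in_sets])
  also have "digits -` cylinder u \<inter> space unit_lebesgue = {left_end u..<left_end u + m u}"
    using code_preimage[of u "length u"] by (auto simp: cylinder_def code_eq_prefix_word)
  also have "emeasure unit_lebesgue {left_end u..<left_end u + m u} = m u"
    using left_end_bounds[of u] nonneg[of u] by (simp add: emeasure_unit_lebesgue subset_iff)
  finally show ?thesis .
qed

end

lemma flow_measure_exists:
  fixes m :: "bool list \<Rightarrow> real"
  assumes "\<And>u. 0 \<le> m u" "m [] = 1" "\<And>u. m (u @ [False]) + m (u @ [True]) = m u"
  obtains \<mu> where "prob_space \<mu>" "sets \<mu> = sets seq_space" "\<And>u. emeasure \<mu> (cylinder u) = m u"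
proof -
  interpret cylinder_flow m
    using assms by unfold_locales
  show ?thesis
    using that prob_space_flow_measure sets_flow_measure emeasure_flow_measure_cylinder by blast
qed

section \<open>A finite-energy measure from a positive hitting limit\<close>

locale hit_solution =
  fixes h :: "bool list \<Rightarrow> real"
  assumes range: "\<And>u. h u \<in> {0..1}"
    and rec: "\<And>u. h u = either_prob ((h (u @ [False]) + h (u @ [True])) / 2)"
    and root_pos: "0 < h []"
begin

definition children :: "bool list \<Rightarrow> real" where
  "children u = h (u @ [False]) + h (u @ [True])"

definition flow :: "bool list \<Rightarrow> real" where
  "flow u = (\<Prod>j<length u. h (take (Suc j) u) / children (take j u))"

lemma flow_Nil [simp]: "flow [] = 1"
  by (simp add: flow_def)

lemma flow_snoc: "flow (u @ [c]) = flow u * (h (u @ [c]) / children u)"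
  unfolding flow_def by simp

lemma children_bounds: "0 \<le> children u \<and> children u \<le> 2"
  using range[of "u @ [False]"] range[of "u @ [True]"] by (simp add: children_def)

lemma children_pos:
  assumes "0 < h u" shows "0 < children u"
proof (rule ccontr)
  assume "\<not> 0 < children u"
  then have "children u = 0"
    using children_bounds[of u] by simp
  then have "h u = 0"
    using rec[of u] by (simp add: children_def either_prob_def)
  then show False
    using assms by simp
qed

lemma flow_nonneg: "0 \<le> flow u"
  by (induction u rule: rev_induct) (use range children_bounds in \<open>auto simp: flow_snoc\<close>)

lemma flow_pos_imp_pos: "0 < flow u \<Longrightarrow> 0 < h u"
proof (induction u rule: rev_induct)
  case (snoc c u)
  then show ?case
    using range[of "u @ [c]"] by (cases "h (u @ [c]) = 0") (auto simp: flow_snoc)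
qed (simp add: root_pos)

lemma flow_split: "flow (u @ [False]) + flow (u @ [True]) = flow u"
proof (cases "flow u = 0")
  case False
  then have "0 < children u"
    using flow_nonneg[of u] flow_pos_imp_pos children_pos by force
  have "flow u * (h (u @ [False]) / children u) + flow u * (h (u @ [True]) / children u)
      = flow u * (children u / children u)"
    by (simp only: children_def add_divide_distrib distrib_left)
  then have "flow (u @ [False]) + flow (u @ [True]) = flow u * (children u / children u)"
    by (simp only: flow_snoc)
  then show ?thesis
    using \<open>0 < children u\<close> by simp
qed (simp add: flow_snoc)

text \<open>Summed over the words of length \<open>k\<close>, this says that the potential
  \<open>Q\<^sub>k = \<Sum> flow u\<^sup>2 / h u\<close> drops by at least a quarter of the \<open>k\<close>-th energy term
  \<open>\<Sum> flow u\<^sup>2\<close>; the recursion for \<open>h\<close> enters through \<open>either_prob_half_inverse_bound\<close>.\<close>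

lemma flow_potential_step:
  "flow u ^ 2 / 4 + (flow (u @ [False]) ^ 2 / h (u @ [False]) + flow (u @ [True]) ^ 2 / h (u @ [True]))
     \<le> flow u ^ 2 / h u"
proof (cases "flow u = 0")
  case False
  then have "0 < h u"
    using flow_nonneg[of u] flow_pos_imp_pos by force
  define s where "s = children u"
  have "0 < s" "s \<le> 2"
    using children_pos[OF \<open>0 < h u\<close>] children_bounds[of u] by (auto simp: s_def)
  have child: "flow (u @ [c]) ^ 2 / h (u @ [c]) = flow u ^ 2 * h (u @ [c]) / s ^ 2" for c
    by (cases "h (u @ [c]) = 0") (auto simp: flow_snoc s_def power2_eq_square)
  have "flow (u @ [False]) ^ 2 / h (u @ [False]) + flow (u @ [True]) ^ 2 / h (u @ [True])
      = flow u ^ 2 * s / s ^ 2"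
    unfolding child by (simp add: s_def children_def add_divide_distrib distrib_left)
  also have "\<dots> = flow u ^ 2 / s"
    using \<open>0 < s\<close> by (simp add: power2_eq_square)
  finally have "flow (u @ [False]) ^ 2 / h (u @ [False]) + flow (u @ [True]) ^ 2 / h (u @ [True])
      = flow u ^ 2 / s" .
  moreover have "flow u ^ 2 / 4 + flow u ^ 2 / s \<le> flow u ^ 2 / h u"
  proof -
    have "flow u ^ 2 / 4 + flow u ^ 2 / s = flow u ^ 2 * (1/4 + 1/s)"
      by (simp add: field_simps)
    also have "\<dots> \<le> flow u ^ 2 * (1 / either_prob (s / 2))"
      using either_prob_half_inverse_bound[OF \<open>0 < s\<close> \<open>s \<le> 2\<close>] by (intro mult_left_mono) auto
    also have "\<dots> = flow u ^ 2 / h u"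
      using rec[of u] by (simp add: s_def children_def)
    finally show ?thesis .
  qed
  ultimately show ?thesis
    by simp
qed (use range[of u] in \<open>simp add: flow_snoc\<close>)

lemma sum_flow_squares_bound: "(\<Sum>k<n. \<Sum>u\<in>{u. length u = k}. flow u ^ 2) \<le> 4 / h []"
proof -
  define Q where "Q k = (\<Sum>u\<in>{u::bool list. length u = k}. flow u ^ 2 / h u)" for k
  have Q_nonneg: "0 \<le> Q k" for k
    unfolding Q_def using range by (intro sum_nonneg divide_nonneg_nonneg) auto
  have Q_step: "(\<Sum>u\<in>{u. length u = k}. flow u ^ 2) / 4 + Q (Suc k) \<le> Q k" for k
  proof -
    have "(\<Sum>u\<in>{u. length u = k}. flow u ^ 2) / 4 + Q (Suc k)
        = (\<Sum>u\<in>{u::bool list. length u = k}. flow u ^ 2 / 4 +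
            (flow (u @ [False]) ^ 2 / h (u @ [False]) + flow (u @ [True]) ^ 2 / h (u @ [True])))"
      unfolding Q_def sum_words_Suc by (simp add: sum_divide_distrib sum.distrib)
    also have "\<dots> \<le> Q k"
      unfolding Q_def by (intro sum_mono flow_potential_step)
    finally show ?thesis .
  qed
  have "(\<Sum>k<n. \<Sum>u\<in>{u. length u = k}. flow u ^ 2) / 4 + Q n \<le> Q 0"
  proof (induction n)
    case (Suc n)
    then show ?case
      using Q_step[of n] by (simp add: add_divide_distrib)
  qed simp
  then show ?thesis
    using Q_nonneg[of n] by (simp add: Q_def)
qed

lemma log_energy_finite:
  assumes sets: "sets \<mu> = sets seq_space" and cyl: "\<And>u. emeasure \<mu> (cylinder u) = flow u"
  shows "log_energy \<mu> \<noteq> \<infinity>"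
proof -
  define S where "S k = (\<Sum>u\<in>{u::bool list. length u = k}. flow u ^ 2)" for k
  have S_nonneg: "0 \<le> S k" for k
    unfolding S_def by (simp add: sum_nonneg)
  have "ennreal (ln 2) * (\<Sum>u\<in>{u. length u = k}. ennreal (flow u) ^ 2) = ennreal (ln 2 * S k)" for k
  proof -
    have "(\<Sum>u\<in>{u. length u = k}. ennreal (flow u) ^ 2) = ennreal (S k)"
      unfolding S_def using flow_nonneg by (simp add: ennreal_power)
    then show ?thesis
      using S_nonneg[of k] by (simp add: ennreal_mult')
  qed
  then have "log_energy \<mu> = (\<Sum>k. ennreal (ln 2 * S (Suc k)))"
    unfolding log_energy_eq_cylinders[OF sets] cyl by simp
  moreover have "summable (\<lambda>k. ln 2 * S (Suc k))"
  proof (rule summableI_nonneg_bounded)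
    fix n
    have "(\<Sum>k<n. ln 2 * S (Suc k)) = ln 2 * (\<Sum>k<n. S (Suc k))"
      by (simp add: sum_distrib_left)
    also have "\<dots> \<le> ln 2 * (\<Sum>k<Suc n. S k)"
      using sum.lessThan_Suc_shift[of S n] S_nonneg[of 0] by (intro mult_left_mono) auto
    also have "\<dots> \<le> ln 2 * (4 / h [])"
      using sum_flow_squares_bound[of "Suc n"] by (intro mult_left_mono) (auto simp: S_def)
    finally show "(\<Sum>k<n. ln 2 * S (Suc k)) \<le> ln 2 * (4 / h [])" .
  qed (simp add: S_nonneg)
  ultimately show ?thesis
    using S_nonneg by (simp add: ennreal_suminf_neq_top)
qed

lemma finite_energy_measure:
  obtains \<mu> where "prob_space \<mu>" "sets \<mu> = sets seq_space"
    "AE a in \<mu>. \<forall>k. 0 < h (prefix_word a k)" "log_energy \<mu> \<noteq> \<infinity>"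
proof -
  obtain \<mu> where \<mu>: "prob_space \<mu>" "sets \<mu> = sets seq_space" "\<And>u. emeasure \<mu> (cylinder u) = flow u"
    using flow_measure_exists[of flow] flow_nonneg flow_split by auto
  have "AE a in \<mu>. \<forall>k. 0 < h (prefix_word a k)"
    using AE_cylinder_nonnull[OF \<mu>(2)]
    by eventually_elim (metis \<mu>(3) flow_nonneg flow_pos_imp_pos ennreal_0 order_less_le)
  then show ?thesis
    using that \<mu> log_energy_finite by blast
qed

end

lemma hit_limit_prefix_words_zero:
  assumes "zero_log_capacity E" and closed: "\<And>a. (\<And>k. prefix_word a k \<in> prefix_words E) \<Longrightarrow> a \<in> E"
  shows "hit_limit (prefix_words E) [] = 0"
proof (rule ccontr)
  let ?h = "hit_limit (prefix_words E)"
  have pc: "prefix_closed (prefix_words E)"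
    by (rule prefix_closed_prefix_words)
  assume "?h [] \<noteq> 0"
  then have "0 < ?h []"
    using hit_limit_range[OF pc, of "[]"] by simp
  then interpret hit_solution ?h
  proof unfold_locales
    show "?h u \<in> {0..1}" for u
      by (rule hit_limit_range[OF pc])
    show "?h u = either_prob ((?h (u @ [False]) + ?h (u @ [True])) / 2)" for u
      by (rule hit_limit_rec[OF pc])
  qed
  obtain \<mu> where \<mu>: "prob_space \<mu>" "sets \<mu> = sets seq_space"
    "AE a in \<mu>. \<forall>k. 0 < ?h (prefix_word a k)" "log_energy \<mu> \<noteq> \<infinity>"
    by (rule finite_energy_measure)
  have "AE a in \<mu>. a \<in> E"
    using \<mu>(3)
  proof eventually_elim
    case (elim a)
    then show ?case
      using closed hit_limit_pos_imp_mem[OF pc] by blast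
  qed
  then show False
    using assms(1) \<mu> unfolding zero_log_capacity_def by blast
qed

section \<open>The binary model\<close>

definition descendants :: "bool list \<Rightarrow> bool list set" where
  "descendants v = {v @ z | z. z \<noteq> []}"

lemma descendants_snoc: "insert (v @ [c]) (descendants (v @ [c])) \<subseteq> descendants v"
  by (auto simp: descendants_def)

lemma Nil_notin_descendants: "[] \<notin> descendants v"
  by (auto simp: descendants_def)

locale binary_model = prob_space M for M :: "'w measure" +
  fixes A :: "bool list \<Rightarrow> 'w \<Rightarrow> bool"
  assumes indep: "indep_vars (\<lambda>_. count_space UNIV) A {v. v \<noteq> []}"
    and fair: "\<And>v. v \<noteq> [] \<Longrightarrow> prob {w \<in> space M. A v w} = 1/2"
begin

abbreviation digit_generators :: "bool list \<Rightarrow> 'w set set" where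
  "digit_generators v \<equiv> {A v -` B \<inter> space M | B. B \<in> sets (count_space (UNIV :: bool set))}"

definition digit_sigma :: "bool list set \<Rightarrow> 'w set set" where
  "digit_sigma K = sigma_sets (space M) (\<Union>v\<in>K. digit_generators v)"

lemma digit_sigma_mono: "K \<subseteq> K' \<Longrightarrow> digit_sigma K \<subseteq> digit_sigma K'"
  unfolding digit_sigma_def by (rule sigma_sets_mono') blast

lemma digit_sigma_Int_Un:
  assumes "a \<in> digit_sigma K" "b \<in> digit_sigma K"
  shows "a \<inter> b \<in> digit_sigma K" "a \<union> b \<in> digit_sigma K"
proof -
  interpret sigma_algebra "space M" "digit_sigma K"
    unfolding digit_sigma_def by (rule sigma_algebra_sigma_sets) auto
  show "a \<inter> b \<in> digit_sigma K" "a \<union> b \<in> digit_sigma K"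
    using assms by auto
qed

definition digit_event :: "bool list \<Rightarrow> bool \<Rightarrow> 'w set" where
  "digit_event v b = {w \<in> space M. A v w = b}"

lemma digit_event_in_digit_sigma: "v \<in> K \<Longrightarrow> digit_event v b \<in> digit_sigma K"
  unfolding digit_sigma_def digit_event_def
  by (rule sigma_sets.Basic) (auto intro!: exI[of _ "{b}"])

lemma digit_sigma_subset_events:
  assumes "[] \<notin> K" shows "digit_sigma K \<subseteq> events"
  unfolding digit_sigma_def
proof (rule sets.sigma_sets_subset, safe)
  fix v B assume "v \<in> K"
  then have "v \<noteq> []"
    using assms by auto
  then have "A v \<in> M \<rightarrow>\<^sub>M count_space UNIV"
    using indep unfolding indep_vars_def2 by auto
  then show "A v -` B \<inter> space M \<in> events"
    by (rule measurable_sets) simp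
qed

lemma digit_event_in_events: "v \<noteq> [] \<Longrightarrow> digit_event v b \<in> events"
  using digit_event_in_digit_sigma[of v "{v}" b] digit_sigma_subset_events[of "{v}"] by auto

lemma digit_sigma_indep:
  assumes "K1 \<inter> K2 = {}" "[] \<notin> K1" "[] \<notin> K2" "e1 \<in> digit_sigma K1" "e2 \<in> digit_sigma K2"
  shows "prob (e1 \<inter> e2) = prob e1 * prob e2"
proof -
  let ?K = "\<lambda>b::bool. if b then K1 else K2"
  let ?e = "\<lambda>b::bool. if b then e1 else e2"
  have "indep_sets digit_generators {v. v \<noteq> []}"
    using indep unfolding indep_vars_def2 by auto
  then have "indep_sets digit_generators (\<Union>b\<in>UNIV. ?K b)"
    by (rule indep_sets_mono_index[rotated]) (use assms(2,3) in \<open>auto split: if_splits\<close>)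
  then have "indep_sets (\<lambda>b. sigma_sets (space M) (\<Union>v\<in>?K b. digit_generators v)) UNIV"
  proof (rule indep_sets_collect_sigma)
    show "Int_stable (digit_generators v)" for v
    proof (rule Int_stableI)
      fix a b assume "a \<in> digit_generators v" "b \<in> digit_generators v"
      then obtain B1 B2 where "a = A v -` B1 \<inter> space M" "b = A v -` B2 \<inter> space M"
        by blast
      then have "a \<inter> b = A v -` (B1 \<inter> B2) \<inter> space M"
        by blast
      then show "a \<inter> b \<in> digit_generators v"
        by (intro CollectI exI[of _ "B1 \<inter> B2"]) simp
    qed
    show "disjoint_family_on ?K UNIV"
      using assms(1) by (auto simp: disjoint_family_on_def)
  qed
  then have "prob (\<Inter>b\<in>UNIV. ?e b) = (\<Prod>b\<in>UNIV. prob (?e b))"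
  proof (rule indep_setsD)
    show "\<forall>b\<in>UNIV. ?e b \<in> sigma_sets (space M) (\<Union>v\<in>?K b. digit_generators v)"
      using assms(4,5) unfolding digit_sigma_def by simp
  qed auto
  moreover have "(\<Inter>b\<in>UNIV. ?e b) = e1 \<inter> e2"
    by (auto simp: UNIV_bool)
  ultimately show ?thesis
    by (simp add: UNIV_bool)
qed

lemma prob_digit_event: assumes "v \<noteq> []" shows "prob (digit_event v b) = 1/2"
proof (cases b)
  case True
  then show ?thesis
    using fair[OF assms] by (simp add: digit_event_def)
next
  case False
  have "digit_event v True \<in> events"
    using digit_event_in_events[OF assms] .
  moreover have "digit_event v False = space M - digit_event v True"
    by (auto simp: digit_event_def)
  ultimately have "prob (digit_event v False) = 1 - prob (digit_event v True)"
    by (simp add: prob_compl)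
  then show ?thesis
    using fair[OF assms] False by (simp add: digit_event_def)
qed

definition hit_event :: "bool list set \<Rightarrow> nat \<Rightarrow> bool list \<Rightarrow> bool list \<Rightarrow> 'w set" where
  "hit_event P n v l = {w \<in> space M. hits (\<lambda>u. A u w) P n v l}"

definition child_hit_event :: "bool list set \<Rightarrow> nat \<Rightarrow> bool list \<Rightarrow> bool list \<Rightarrow> bool \<Rightarrow> 'w set" where
  "child_hit_event P n v l c =
     (digit_event (v @ [c]) True \<inter> hit_event P n (v @ [c]) (l @ [True])) \<union>
     (digit_event (v @ [c]) False \<inter> hit_event P n (v @ [c]) (l @ [False]))"

lemma hit_event_0: "hit_event P 0 v l = (if l \<in> P then space M else {})"
  by (auto simp: hit_event_def)

lemma hit_event_Suc:
  "hit_event P (Suc n) v l = child_hit_event P n v l False \<union> child_hit_event P n v l True"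
proof -
  have "hits (\<lambda>u. A u w) P (Suc n) v l \<longleftrightarrow>
      (\<exists>c. (A (v @ [c]) w = True \<and> hits (\<lambda>u. A u w) P n (v @ [c]) (l @ [True])) \<or>
           (A (v @ [c]) w = False \<and> hits (\<lambda>u. A u w) P n (v @ [c]) (l @ [False])))" for w
    by simp (metis (full_types))
  then show ?thesis
    unfolding hit_event_def child_hit_event_def digit_event_def by (simp only: ex_bool_eq) blast
qed

lemma child_hit_event_in_digit_sigma:
  assumes "\<And>l. hit_event P n (v @ [c]) l \<in> digit_sigma (descendants (v @ [c]))"
  shows "child_hit_event P n v l c \<in> digit_sigma (insert (v @ [c]) (descendants (v @ [c])))"
  using assms digit_sigma_mono[of "descendants (v @ [c])" "insert (v @ [c]) (descendants (v @ [c]))"]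
  unfolding child_hit_event_def
  by (intro digit_sigma_Int_Un digit_event_in_digit_sigma) auto

lemma hit_event_in_digit_sigma: "hit_event P n v l \<in> digit_sigma (descendants v)"
proof (induction n arbitrary: v l)
  case 0
  show ?case
    unfolding hit_event_0 digit_sigma_def by (simp add: sigma_sets_top sigma_sets.Empty)
next
  case (Suc n)
  have child: "child_hit_event P n v l c \<in> digit_sigma (descendants v)" for c
    using child_hit_event_in_digit_sigma[of P n v c, OF Suc.IH] digit_sigma_mono[OF descendants_snoc[of v c]]
    by blast
  show ?case
    unfolding hit_event_Suc by (rule digit_sigma_Int_Un(2)[OF child child])
qed

lemma hit_event_in_events: "hit_event P n v l \<in> events"
  using hit_event_in_digit_sigma digit_sigma_subset_events Nil_notin_descendants by blast

lemma prob_hit_event: "prob (hit_event P n v l) = hit_prob P n l"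
proof (induction n arbitrary: v l)
  case 0
  show ?case
    by (simp add: hit_event_0 prob_space)
next
  case (Suc n)
  let ?s = "(hit_prob P n (l @ [False]) + hit_prob P n (l @ [True])) / 2"
  have child_sigma: "child_hit_event P n v l c \<in> digit_sigma (insert (v @ [c]) (descendants (v @ [c])))" for c
    by (rule child_hit_event_in_digit_sigma[OF hit_event_in_digit_sigma])
  have child_events: "child_hit_event P n v l c \<in> events" for c
    using child_sigma[of c] digit_sigma_subset_events[of "insert (v @ [c]) (descendants (v @ [c]))"]
    by (auto simp: Nil_notin_descendants)
  have prob_child: "prob (child_hit_event P n v l c) = ?s" for c
  proof -
    have split: "prob (digit_event (v @ [c]) b \<inter> hit_event P n (v @ [c]) l') = 1/2 * hit_prob P n l'"
      for b l'
    proof -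
      have "prob (digit_event (v @ [c]) b \<inter> hit_event P n (v @ [c]) l')
          = prob (digit_event (v @ [c]) b) * prob (hit_event P n (v @ [c]) l')"
      proof (rule digit_sigma_indep)
        show "{v @ [c]} \<inter> descendants (v @ [c]) = {}"
          by (auto simp: descendants_def)
      qed (auto simp: Nil_notin_descendants digit_event_in_digit_sigma hit_event_in_digit_sigma)
      then show ?thesis
        using prob_digit_event[of "v @ [c]" b] Suc.IH by simp
    qed
    have disj: "digit_event (v @ [c]) True \<inter> digit_event (v @ [c]) False = {}"
      by (auto simp: digit_event_def)
    have "prob (child_hit_event P n v l c)
        = prob (digit_event (v @ [c]) True \<inter> hit_event P n (v @ [c]) (l @ [True]))
          + prob (digit_event (v @ [c]) False \<inter> hit_event P n (v @ [c]) (l @ [False]))"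
      unfolding child_hit_event_def using disj
      by (intro finite_measure_Union sets.Int hit_event_in_events digit_event_in_events) auto
    then show ?thesis
      using split by simp
  qed
  have inter: "prob (child_hit_event P n v l False \<inter> child_hit_event P n v l True) = ?s * ?s"
    using digit_sigma_indep[OF _ _ _ child_sigma[of False] child_sigma[of True]] prob_child
    by (auto simp: descendants_def)
  have union: "prob (hit_event P (Suc n) v l) = prob (child_hit_event P n v l False)
      + prob (child_hit_event P n v l True)
      - prob (child_hit_event P n v l False \<inter> child_hit_event P n v l True)"
    unfolding hit_event_Suc using child_events by (intro measure_Un3) (auto simp: fmeasurable_eq_sets)
  have "prob (hit_event P (Suc n) v l) = ?s + ?s - ?s * ?s"
    by (simp only: union prob_child inter)
  also have "\<dots> = either_prob ?s"
    by (simp add: either_prob_def power2_eq_square algebra_simps)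
  finally show ?case
    by simp
qed

lemma AE_eventually_misses:
  assumes "prefix_closed P" "hit_limit P [] = 0"
  shows "AE w in M. \<exists>n. \<not> hits (\<lambda>v. A v w) P n [] []"
proof (rule AE_I')
  let ?N = "\<Inter>n. hit_event P n [] []"
  have "?N \<in> events"
    using hit_event_in_events by auto
  have "prob ?N \<le> hit_prob P n []" for n
    using finite_measure_mono[of ?N "hit_event P n [] []"] hit_event_in_events prob_hit_event
    by auto
  then have "prob ?N \<le> 0"
    using hit_prob_tendsto[OF assms(1), of "[]"] assms(2) by (intro LIMSEQ_le_const) auto
  then show "?N \<in> null_sets M"
    using \<open>?N \<in> events\<close> measure_nonneg[of M ?N] by (auto simp: emeasure_eq_measure)
  show "{w \<in> space M. \<not> (\<exists>n. \<not> hits (\<lambda>v. A v w) P n [] [])} \<subseteq> ?N"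
    by (auto simp: hit_event_def)
qed

lemma AE_not_in_attractor:
  assumes "0 < r" "r < 1" "zero_log_capacity (expansions r x)"
  shows "AE w in M. x \<notin> attractor r (\<lambda>v. A v w)"
proof -
  have "hit_limit (prefix_words (expansions r x)) [] = 0"
    using assms by (intro hit_limit_prefix_words_zero expansions_closed)
  from AE_eventually_misses[OF prefix_closed_prefix_words this]
  show ?thesis
    by eventually_elim (auto simp: attractor_def hits_coding_map)
qed

end

theorem proposition1p5:
  fixes M :: "'w measure" and A :: "bool list \<Rightarrow> 'w \<Rightarrow> bool" and lam :: real
  assumes "prob_space M"
    and "prob_space.indep_vars M (\<lambda>_. count_space UNIV) A {v. v \<noteq> []}"
    and "\<And>v. v \<noteq> [] \<Longrightarrow> prob_space.prob M {w \<in> space M. A v w} = 1/2"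
    and "1/2 < lam" and "lam \<le> (sqrt 5 - 1) / 2"
    and "{0..lam/(1-lam)} \<subseteq>
           closure {x \<in> {0..lam/(1-lam)}. zero_log_capacity (expansions lam x)}"
  shows "AE w in M. totally_disconnected (attractor lam (\<lambda>v. A v w))"
proof -
  interpret binary_model M A
    using assms(1-3) by (simp add: binary_model_def binary_model_axioms_def)
  have "sqrt 5 < 3"
    by (rule real_less_lsqrt) auto
  then have lam: "0 < lam" "lam < 1"
    using assms(4,5) by auto
  define D where "D = {x \<in> {0..lam/(1-lam)}. zero_log_capacity (expansions lam x)}"
  obtain C where "countable C" "C \<subseteq> D" "D \<subseteq> closure C"
    by (rule countable_dense_subset)
  then have dense: "{0..lam/(1-lam)} \<subseteq> closure C"
    using assms(6) unfolding D_def[symmetric] by (metis closure_closure closure_mono order_trans)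
  have "AE w in M. \<forall>x\<in>C. x \<notin> attractor lam (\<lambda>v. A v w)"
    using \<open>countable C\<close> \<open>C \<subseteq> D\<close> AE_not_in_attractor[OF lam] unfolding D_def
    by (subst AE_ball_countable) auto
  then show ?thesis
  proof eventually_elim
    case (elim w)
    show ?case
      using attractor_subset[OF lam] dense elim by (intro totally_disconnected_if_avoids_dense) auto
  qed
qed

end
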